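(* Let $(K,W)$ be either $(K^+_{m,n},W^+_{m,n})$ or $(K_{m,n},W_{m,n})$, let $P$ be a simple $K$-module and $\lambda\in\mathbb{C}^n$. Then: (1) $\sigma_\lambda^2=0$ on $F(P,M(\lambda))$; (2) for $r\in\{0,\dots,m\}$ (with $\lambda=\mathbf{0}$ if $r\neq m$), $\sigma_\lambda(F(P,L(V(r)\otimes N(\lambda))))=0$ if and only if $(r;\lambda)=(m;(-1,\dots,-1))$.
   Context: All vector spaces are over $\mathbb{C}$; modules are $\mathbb{Z}_2$-graded, simple means no graded submodules other than $0$ and itself. Fix $m,n\in\mathbb{Z}_{\ge0}$, not both zero. $A^+_{m,n}=\mathbb{C}[t_1,\dots,t_m]\otimes\Lambda(\xi_1,\dots,\xi_n)$, $A_{m,n}=\mathbb{C}[t_1^{\pm1},\dots,t_m^{\pm1}]\otimes\Lambda(\xi_1,\dots,\xi_n)$ ($t_i$ even, $\xi_j$ odd). $W^+_{m,n}$ (resp. $W_{m,n}$) is the Lie superalgebra of super-derivations of $A^+_{m,n}$ (resp. $A_{m,n}$); $K^+_{m,n}$ (resp. $K_{m,n}$) is the super Weyl algebra of operators on $A^+_{m,n}$ (resp. $A_{m,n}$) generated by multiplication by $t_i$ (resp. $t_i^{\pm1}$), $\xi_j$ and by $\partial_{t_i}=\partial/\partial t_i$, $\partial_{\xi_j}=\partial/\partial\xi_j$. $\mathfrak{gl}(m,n)$ has matrix units $E_{a,b}$, even part $\mathfrak{gl}(m,n)_0=\mathfrak{gl}_m\oplus\mathfrak{gl}_n$ ($\mathfrak{gl}_m=\mathrm{span}\{E_{i,k}:i,k\le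 m\}$, $\mathfrak{gl}_n\cong\mathrm{span}\{E_{m+l,m+j}\}$ via $E_{l,j}\mapsto E_{m+l,m+j}$), odd part spanned by $E_{i,m+j},E_{m+j,i}$. There is a Lie superalgebra homomorphism $\pi:W\to K\otimes U(\mathfrak{gl}(m,n))$ with $\pi(t^\alpha\xi_I\partial_{t_i})=t^\alpha\xi_I\partial_{t_i}\otimes1+\sum_{s=1}^m\partial_{t_s}(t^\alpha\xi_I)\otimes E_{s,i}+(-1)^{|I|-1}\sum_{l=1}^n\partial_{\xi_l}(t^\alpha\xi_I)\otimes E_{m+l,i}$, $\pi(t^\alpha\xi_I\partial_{\xi_j})=t^\alpha\xi_I\partial_{\xi_j}\otimes1+\sum_{s=1}^m\partial_{t_s}(t^\alpha\xi_I)\otimes E_{s,m+j}+(-1)^{|I|-1}\sum_{l=1}^n\partial_{\xi_l}(t^\alpha\xi_I)\otimes E_{m+l,m+j}$ (here $t^\alpha$ with $\alpha\in\mathbb{Z}_{\ge0}^m$ resp. $\mathbb{Z}^m$, $\xi_I$ the increasing product over $I\subset\{1,\dots,n\}$, and derivatives of $t^\alpha\xi_I$ are multiplication operators), and for a $K$-module $P$ and a $\mathfrak{gl}(m,n)$-module $M$, $F(P,M)=P\otimes M$ is a $W$-module via $x\cdot(u\otimes v)=\pi(x)(u\otimes v)$, $(a\otimes b)(u\otimes v)=(-1)^{|b||u|}au\otimes bv$. For $\lambda\in\mathbb{C}^n$: $e_1,\dots,e_n$ standard basis of $\mathbb{Z}^n$, $|\mu|=\sum_j\mu_j$, $\mathbf{0}=(0,\dots,0)$;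 $S(\lambda)=X_1\times\dots\times X_n$ with $X_j=\lambda_j+\mathbb{Z}$ if $\lambda_j\notin\mathbb{Z}$, $X_j=\mathbb{Z}_{\ge0}$ if $\lambda_j\in\mathbb{Z}_{\ge0}$, $X_j=\{-1,-2,\dots\}$ if $\lambda_j\in\{-1,-2,\dots\}$; $W(\lambda)$ has basis $\{y(\lambda'):\lambda'\in S(\lambda)\}$, $y(\mu)=0$ for $\mu\notin S(\lambda)$, $\mathfrak{gl}_n$ acting by $E_{l,j}y(\lambda')=\lambda'_jy(\lambda'-e_j+e_l)$. $V(r)=\Lambda^r(\mathbb{C}^m)$ with natural $\mathfrak{gl}_m$-action ($e_1,\dots,e_m$ standard basis of $\mathbb{C}^m$). $M(\lambda)=\bigoplus_{r=0}^mV(r)\otimes W(\lambda)$, spanned by $e_{i_1}\wedge\dots\wedge e_{i_r}y(\lambda')$, with parity $|\lambda-\lambda'|\bmod 2$; it is a $\mathfrak{gl}(m,n)$-module with $\mathfrak{gl}(m,n)_0$ acting by tensor product and $E_{i,m+j}\cdot e_{i_1}\wedge\dots\wedge e_{i_r}y(\lambda')=(-1)^r\lambda'_je_i\wedge e_{i_1}\wedge\dots\wedge e_{i_r}y(\lambda'-e_j)$, $E_{m+j,i}\cdot e_{i_1}\wedge\dots\wedge e_{i_r}y(\lambda')=0$ if $i\notin\{i_1,\dots,i_r\}$ and $=(-1)^{r-s}e_{i_1}\wedge\dots\wedge\widehat{e_{i_s}}\wedge\dots\wedge e_{i_r}y(\lambda'+e_j)$ if $i=i_s$. Notation: $L(V(m)\otimes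 N(\lambda))$ denotes the $\mathfrak{gl}(m,n)$-submodule $\mathrm{span}\{e_{i_1}\wedge\dots\wedge e_{i_r}y(\lambda'):0\le r\le m,\ \lambda'\in S(\lambda),\ m+|\lambda|=r+|\lambda'|\}$ of $M(\lambda)$, and for $r\in\{0,\dots,m\}$, $L(V(r)\otimes N(\mathbf{0}))$ denotes the submodule $\mathrm{span}\{e_{i_1}\wedge\dots\wedge e_{i_{r'}}y(\alpha):0\le r'\le r,\ \alpha\in\mathbb{Z}_{\ge0}^n,\ r=r'+|\alpha|\}$ of $M(\mathbf{0})$ (these are simple modules isomorphic to the simple tops of the corresponding Kac modules). Define operators on $M(\lambda)$: $e_i\wedge(e_{i_1}\wedge\dots\wedge e_{i_r}y(\lambda'))=e_i\wedge e_{i_1}\wedge\dots\wedge e_{i_r}y(\lambda')$ and $\tau_j(e_{i_1}\wedge\dots\wedge e_{i_r}y(\lambda'))=(-1)^re_{i_1}\wedge\dots\wedge e_{i_r}y(\lambda'+e_j)$. Define $\sigma_\lambda:F(P,M(\lambda))\to F(P,M(\lambda))$ by $\sigma_\lambda(u\otimes v)=\sum_{s=1}^m\partial_{t_s}u\otimes e_s\wedge v+(-1)^{|u|-1}\sum_{l=1}^n\partial_{\xi_l}u\otimes\tau_l(v)$. *)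

theory Defs
  imports Complex_Main "HOL-Library.Function_Algebras"
begin

text \<open>
  Even variables t_1..t_m and odd variables xi_1..xi_n are indexed by
  naturals in {1..m} and {1..n}.  An element lambda of C^n is a function nat => complex,
  of which only the values on {1..n} matter.

  A Z2-graded K-module P is a complex vector space (carrier type 'p with scalar
  multiplication sc), with a linear grading involution gam (gam = id on P_0,
  gam = -id on P_1), and linear operators
    T i  (mult. by t_i),  Ti i (mult. by t_i^{-1}, only used in the Laurent case),
    Dt i (d/dt_i),  X j (mult. by xi_j),  Dx j (d/dxi_j),
  satisfying the defining relations of the super Weyl algebra K^+_{m,n}
  (resp. K_{m,n} when laurent = True, where in addition Ti i is a two-sided inverse
  of T i).
\<close>

definition weyl_super_module ::
  "nat \<Rightarrow> nat \<Rightarrow> bool \<Rightarrow> (complex \<Rightarrow> 'p::ab_group_add \<Rightarrow> 'p) \<Rightarrow> ('p \<Rightarrow> 'p) \<Rightarrow>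
   (nat \<Rightarrow> 'p \<Rightarrow> 'p) \<Rightarrow> (nat \<Rightarrow> 'p \<Rightarrow> 'p) \<Rightarrow> (nat \<Rightarrow> 'p \<Rightarrow> 'p) \<Rightarrow>
   (nat \<Rightarrow> 'p \<Rightarrow> 'p) \<Rightarrow> (nat \<Rightarrow> 'p \<Rightarrow> 'p) \<Rightarrow> bool" where
  "weyl_super_module m n laurent sc gam T Ti Dt X Dx \<longleftrightarrow>
     vector_space sc \<and>
     Vector_Spaces.linear sc sc gam \<and> (\<forall>u. gam (gam u) = u) \<and>
     (\<forall>i\<in>{1..m}. Vector_Spaces.linear sc sc (T i) \<and> Vector_Spaces.linear sc sc (Dt i)) \<and>
     (\<forall>j\<in>{1..n}. Vector_Spaces.linear sc sc (X j) \<and> Vector_Spaces.linear sc sc (Dx j)) \<and>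
     (\<forall>i\<in>{1..m}. \<forall>u. gam (T i u) = T i (gam u) \<and> gam (Dt i u) = Dt i (gam u)) \<and>
     (\<forall>j\<in>{1..n}. \<forall>u. gam (X j u) = - X j (gam u) \<and> gam (Dx j u) = - Dx j (gam u)) \<and>
     (\<forall>i\<in>{1..m}. \<forall>k\<in>{1..m}. \<forall>u.
        T i (T k u) = T k (T i u) \<and> Dt i (Dt k u) = Dt k (Dt i u) \<and>
        Dt i (T k u) = T k (Dt i u) + (if i = k then u else 0)) \<and>
     (\<forall>j\<in>{1..n}. \<forall>l\<in>{1..n}. \<forall>u.
        X j (X l u) = - X l (X j u) \<and> Dx j (Dx l u) = - Dx l (Dx j u) \<and>
        Dx j (X l u) = - X l (Dx j u) + (if j = l then u else 0)) \<and>
     (\<forall>i\<in>{1..m}. \<forall>j\<in>{1..n}. \<forall>u.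
        T i (X j u) = X j (T i u) \<and> T i (Dx j u) = Dx j (T i u) \<and>
        Dt i (X j u) = X j (Dt i u) \<and> Dt i (Dx j u) = Dx j (Dt i u)) \<and>
     (laurent \<longrightarrow> (\<forall>i\<in>{1..m}. Vector_Spaces.linear sc sc (Ti i) \<and>
        (\<forall>u. Ti i (T i u) = u \<and> T i (Ti i u) = u)))"

definition simple_weyl_super_module ::
  "nat \<Rightarrow> nat \<Rightarrow> bool \<Rightarrow> (complex \<Rightarrow> 'p::ab_group_add \<Rightarrow> 'p) \<Rightarrow> ('p \<Rightarrow> 'p) \<Rightarrow>
   (nat \<Rightarrow> 'p \<Rightarrow> 'p) \<Rightarrow> (nat \<Rightarrow> 'p \<Rightarrow> 'p) \<Rightarrow> (nat \<Rightarrow> 'p \<Rightarrow> 'p) \<Rightarrow>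
   (nat \<Rightarrow> 'p \<Rightarrow> 'p) \<Rightarrow> (nat \<Rightarrow> 'p \<Rightarrow> 'p) \<Rightarrow> bool" where
  "simple_weyl_super_module m n laurent sc gam T Ti Dt X Dx \<longleftrightarrow>
     weyl_super_module m n laurent sc gam T Ti Dt X Dx \<and>
     (\<exists>u::'p. u \<noteq> 0) \<and>
     (\<forall>U. module.subspace sc U \<and> gam ` U \<subseteq> U \<and>
          (\<forall>i\<in>{1..m}. T i ` U \<subseteq> U \<and> Dt i ` U \<subseteq> U \<and> (laurent \<longrightarrow> Ti i ` U \<subseteq> U)) \<and>
          (\<forall>j\<in>{1..n}. X j ` U \<subseteq> U \<and> Dx j ` U \<subseteq> U)
        \<longrightarrow> U = {0} \<or> U = UNIV)"

definition Xset :: "complex \<Rightarrow> complex set" where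
  "Xset c = (if c \<in> \<nat> then \<nat>
             else if c \<in> \<int> then {z. \<exists>k::nat. k \<ge> 1 \<and> z = - of_nat k}
             else {z. z - c \<in> \<int>})"

definition S_set :: "nat \<Rightarrow> (nat \<Rightarrow> complex) \<Rightarrow> (nat \<Rightarrow> complex) set" where
  "S_set n lam = {mu. (\<forall>j\<in>{1..n}. mu j \<in> Xset (lam j)) \<and> (\<forall>j. j \<notin> {1..n} \<longrightarrow> mu j = 0)}"

definition absv :: "nat \<Rightarrow> (nat \<Rightarrow> complex) \<Rightarrow> complex" where
  "absv n mu = (\<Sum>j=1..n. mu j)"

definition unitv :: "nat \<Rightarrow> nat \<Rightarrow> complex" where
  "unitv l = (\<lambda>j. if j = l then 1 else 0)"

text \<open>Basis of M(lambda): e_I y(mu) with I \<subseteq> {1..m} (wedge of e_i, i \<in> I, in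
  increasing order) and mu \<in> S(lambda).  P \<otimes> M(lambda) is represented by finitely
  supported functions from basis indices to P: f corresponds to the sum of f b \<otimes> b.\<close>
type_synonym bidx = "nat set \<times> (nat \<Rightarrow> complex)"

definition Bset :: "nat \<Rightarrow> nat \<Rightarrow> (nat \<Rightarrow> complex) \<Rightarrow> bidx set" where
  "Bset m n lam = {(I, mu). I \<subseteq> {1..m} \<and> mu \<in> S_set n lam}"

definition supp :: "(bidx \<Rightarrow> 'p::zero) \<Rightarrow> bidx set" where
  "supp f = {b. f b \<noteq> 0}"

definition Fspace :: "nat \<Rightarrow> nat \<Rightarrow> (nat \<Rightarrow> complex) \<Rightarrow> (bidx \<Rightarrow> 'p::zero) set" where
  "Fspace m n lam = {f. finite (supp f) \<and> supp f \<subseteq> Bset m n lam}"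

text \<open>Basis indices spanning L(V(m) \<otimes> N(lambda)) (r = m) resp. L(V(r) \<otimes> N(0)) (r < m).\<close>
definition Lidx :: "nat \<Rightarrow> nat \<Rightarrow> nat \<Rightarrow> (nat \<Rightarrow> complex) \<Rightarrow> bidx set" where
  "Lidx m n r lam =
     (if r = m then {(I, mu). I \<subseteq> {1..m} \<and> mu \<in> S_set n lam \<and>
                       of_nat m + absv n lam = of_nat (card I) + absv n mu}
      else {(I, alpha). I \<subseteq> {1..m} \<and> card I \<le> r \<and> alpha \<in> S_set n (\<lambda>_. 0) \<and>
                       of_nat r = of_nat (card I) + absv n alpha})"

definition FLspace :: "nat \<Rightarrow> nat \<Rightarrow> nat \<Rightarrow> (nat \<Rightarrow> complex) \<Rightarrow> (bidx \<Rightarrow> 'p::zero) set" where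
  "FLspace m n r lam = {f. finite (supp f) \<and> supp f \<subseteq> Lidx m n r lam}"

definition tens :: "'p::zero \<Rightarrow> bidx \<Rightarrow> (bidx \<Rightarrow> 'p)" where
  "tens u b = (\<lambda>c. if c = b then u else 0)"

text \<open>Sign with e_s \<wedge> e_I = wsign s I * e_{I \<union> {s}} for s \<notin> I.\<close>
definition wsign :: "nat \<Rightarrow> nat set \<Rightarrow> complex" where
  "wsign s I = (-1) ^ card {k\<in>I. k < s}"

text \<open>sigma_lambda(u \<otimes> e_I y(mu)) for u homogeneous of parity d (d \<in> {0,1});
  (-1)^(|u|-1) = (-1)^(d+1).  e_s \<wedge> e_I = 0 if s \<in> I;
  tau_l(e_I y(mu)) = (-1)^|I| e_I y(mu + e_l), which is 0 if mu + e_l \<notin> S(lambda).\<close>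
definition sigma_hom ::
  "nat \<Rightarrow> nat \<Rightarrow> (nat \<Rightarrow> complex) \<Rightarrow> (complex \<Rightarrow> 'p::ab_group_add \<Rightarrow> 'p) \<Rightarrow>
   (nat \<Rightarrow> 'p \<Rightarrow> 'p) \<Rightarrow> (nat \<Rightarrow> 'p \<Rightarrow> 'p) \<Rightarrow> 'p \<Rightarrow> nat \<Rightarrow> bidx \<Rightarrow> (bidx \<Rightarrow> 'p)" where
  "sigma_hom m n lam sc Dt Dx u d b =
     (case b of (I, mu) \<Rightarrow>
       (\<Sum>s\<in>{1..m}. if s \<in> I then 0 else tens (sc (wsign s I) (Dt s u)) (insert s I, mu))
       + (\<Sum>l\<in>{1..n}. if mu + unitv l \<in> S_set n lam
            then tens (sc ((-1) ^ (d + 1) * (-1) ^ card I) (Dx l u)) (I, mu + unitv l)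
            else 0))"

text \<open>sigma_lambda on F(P,M(lambda)), extended additively after splitting each
  P-component into its even part (u + gam u)/2 and odd part (u - gam u)/2.\<close>
definition sigma ::
  "nat \<Rightarrow> nat \<Rightarrow> (nat \<Rightarrow> complex) \<Rightarrow> (complex \<Rightarrow> 'p::ab_group_add \<Rightarrow> 'p) \<Rightarrow> ('p \<Rightarrow> 'p) \<Rightarrow>
   (nat \<Rightarrow> 'p \<Rightarrow> 'p) \<Rightarrow> (nat \<Rightarrow> 'p \<Rightarrow> 'p) \<Rightarrow> (bidx \<Rightarrow> 'p) \<Rightarrow> (bidx \<Rightarrow> 'p)" where
  "sigma m n lam sc gam Dt Dx f =
     (\<Sum>b\<in>supp f. sigma_hom m n lam sc Dt Dx (sc (1/2) (f b + gam (f b))) 0 b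
                 + sigma_hom m n lam sc Dt Dx (sc (1/2) (f b - gam (f b))) 1 b)"

end

theory Submission
  imports Defs
begin

text \<open>
  Write \<open>\<sigma> = \<sigma>\<^sub>t + \<sigma>\<^sub>\<xi>\<close> with \<open>\<sigma>\<^sub>t(u \<otimes> v) = \<Sum>\<^sub>s \<partial>\<^sub>t\<^sub>s u \<otimes> e\<^sub>s \<and> v\<close> and
  \<open>\<sigma>\<^sub>\<xi>(u \<otimes> v) = \<plusminus>\<Sum>\<^sub>l \<partial>\<^sub>\<xi>\<^sub>l u \<otimes> \<tau>\<^sub>l v\<close>.  In \<open>\<sigma>\<^sub>t\<^sup>2\<close> the commuting operators
  \<open>\<partial>\<^sub>t\<^sub>s \<partial>\<^sub>t\<^sub>s\<^sub>'\<close> meet the anticommuting \<open>e\<^sub>s\<^sub>' \<and> e\<^sub>s \<and>\<close>; in \<open>\<sigma>\<^sub>\<xi>\<^sup>2\<close> the anticommuting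
  \<open>\<partial>\<^sub>\<xi>\<^sub>l\<^sub>' \<partial>\<^sub>\<xi>\<^sub>l\<close> meet the commuting \<open>\<tau>\<^sub>l\<^sub>' \<tau>\<^sub>l\<close>; and in the mixed terms the sign
  \<open>(-1)\<^sup>r\<close> of \<open>\<tau>\<close> together with the parity change caused by \<open>\<partial>\<^sub>\<xi>\<close> makes the two
  orders cancel.

  For \<open>\<lambda> = (-1,\<dots>,-1)\<close> a degree count shows that \<open>L(V(m) \<otimes> N(\<lambda>))\<close> is spanned by
  \<open>e\<^sub>1 \<and> \<dots> \<and> e\<^sub>m y(\<lambda>)\<close>, which is killed by every \<open>e\<^sub>s \<and>\<close> and every \<open>\<tau>\<^sub>l\<close>.  In all other
  cases one pure tensor \<open>u \<otimes> b\<close> has a nonzero image, because on a nonzero \<open>K\<close>-module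
  no \<open>\<partial>\<^sub>t\<^sub>s\<close> or \<open>\<partial>\<^sub>\<xi>\<^sub>l\<close> vanishes, by \<open>[\<partial>\<^sub>t\<^sub>s, t\<^sub>s] = 1 = [\<partial>\<^sub>\<xi>\<^sub>l, \<xi>\<^sub>l]\<close>.
\<close>

lemma sum_fun_apply: "(\<Sum>a\<in>A. g a) x = (\<Sum>a\<in>A. g a x)"
  by (induct A rule: infinite_finite_induct) auto

lemma tens_apply: "tens x c d = (if d = c then x else 0)"
  by (simp add: tens_def)

lemma tens_zero [simp]: "tens 0 c = 0"
  by (auto simp: tens_def fun_eq_iff)

lemma tens_add: "tens (x + y :: 'a::monoid_add) c = tens x c + tens y c"
  by (auto simp: tens_def fun_eq_iff)

lemma tens_uminus: "tens (- x :: 'a::group_add) c = - tens x c"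
  by (auto simp: tens_def fun_eq_iff)

lemma supp_tens_subset: "supp (tens u c) \<subseteq> {c}"
  by (auto simp: supp_def tens_def)

lemma finite_supp_tens [simp]: "finite (supp (tens u c))"
  using supp_tens_subset finite_subset by blast

lemma finite_supp_zero [simp]: "finite (supp (0 :: bidx \<Rightarrow> 'p::zero))"
  by (simp add: supp_def)

lemma supp_add_subset: "supp (f + g :: bidx \<Rightarrow> 'a::monoid_add) \<subseteq> supp f \<union> supp g"
  by (auto simp: supp_def)

lemma finite_supp_add [simp]:
  "finite (supp f) \<Longrightarrow> finite (supp g) \<Longrightarrow> finite (supp (f + g :: bidx \<Rightarrow> 'a::monoid_add))"
  by (meson finite_Un finite_subset supp_add_subset)

lemma finite_supp_sum:
  "(\<And>a. a \<in> A \<Longrightarrow> finite (supp (g a))) \<Longrightarrow>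
   finite (supp (\<Sum>a\<in>A. g a :: bidx \<Rightarrow> 'a::comm_monoid_add))"
  by (induct A rule: infinite_finite_induct) auto

lemma wsign_insert:
  assumes "finite I" "s \<notin> I" "s \<noteq> s'"
  shows "wsign s' (insert s I) = (if s < s' then -1 else 1) * wsign s' I"
proof (cases "s < s'")
  case True
  then have "{k\<in>insert s I. k < s'} = insert s {k\<in>I. k < s'}" by auto
  then show ?thesis using True assms(1,2) by (simp add: wsign_def)
next
  case False
  then have "{k\<in>insert s I. k < s'} = {k\<in>I. k < s'}" by auto
  then show ?thesis using False by (simp add: wsign_def)
qed

lemma wsign_insert_swap:
  assumes "finite I" "s \<notin> I" "s' \<notin> I" "s \<noteq> s'"
  shows "wsign s' (insert s I) * wsign s I = - (wsign s (insert s' I) * wsign s' I)"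
  using assms by (auto simp: wsign_insert)

lemma Ints_not_Nats_imp_neg:
  assumes "(c::complex) \<in> \<int>" "c \<notin> \<nat>"
  shows "\<exists>k::nat. k \<ge> 1 \<and> c = - of_nat k"
proof -
  obtain k :: int where k: "c = of_int k" using assms(1) Ints_cases by blast
  have "k < 0"
  proof (rule ccontr)
    assume "\<not> k < 0"
    then have "c = of_nat (nat k)" using k by simp
    then show False using assms(2) by simp
  qed
  then show ?thesis using k by (intro exI[of _ "nat (-k)"]) auto
qed

lemma minus_one_notin_Nats: "(-1::complex) \<notin> \<nat>"
proof
  assume "(-1::complex) \<in> \<nat>"
  then obtain k :: nat where "(-1::complex) = of_nat k" by (auto elim: Nats_cases)
  then have "Re (-1::complex) = Re (of_nat k)" by simp
  then show False by simp
qed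

lemma Xset_minus_one: "Xset (-1) = {z. \<exists>k::nat. k \<ge> 1 \<and> z = - of_nat k}"
  using minus_one_notin_Nats by (simp add: Xset_def)

lemma mem_Xset_self: "c \<in> Xset c"
  using Ints_not_Nats_imp_neg[of c] by (auto simp: Xset_def)

lemma add_one_mem_Xset:
  assumes "c \<noteq> -1"
  shows "c + 1 \<in> Xset c"
proof (cases "c \<in> \<int> - \<nat>")
  case True
  then obtain k :: nat where k: "k \<ge> 1" "c = - of_nat k"
    using Ints_not_Nats_imp_neg by blast
  with assms have "k \<ge> 2" by (cases "k = 1") auto
  with k have "c + 1 = - of_nat (k - 1)" "k - 1 \<ge> 1" by auto
  then show ?thesis using True by (auto simp: Xset_def)
qed (auto simp: Xset_def)

lemma S_set_add_unitv_between:
  assumes "mu \<in> S_set n lam" "l \<in> {1..n}" "l \<noteq> l'" "mu + unitv l + unitv l' \<in> S_set n lam"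
  shows "mu + unitv l \<in> S_set n lam"
  unfolding S_set_def mem_Collect_eq
proof (intro conjI ballI allI impI)
  fix j assume j: "j \<in> {1..n}"
  show "(mu + unitv l) j \<in> Xset (lam j)"
  proof (cases "j = l")
    case True
    then have "(mu + unitv l) j = (mu + unitv l + unitv l') j" using assms(3) by (simp add: unitv_def)
    moreover have "(mu + unitv l + unitv l') j \<in> Xset (lam j)"
      using assms(4) j unfolding S_set_def by blast
    ultimately show ?thesis by (simp del: plus_fun_apply)
  next
    case False
    then show ?thesis using assms(1) j by (simp add: S_set_def unitv_def)
  qed
next
  fix j assume "j \<notin> {1..n}"
  then show "(mu + unitv l) j = 0" using assms(1,2) by (auto simp: S_set_def unitv_def)
qed

lemma Lidx_minus_one:
  assumes lam: "\<forall>j\<in>{1..n}. lam j = -1" and b: "(I, mu) \<in> Lidx m n m lam"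
  shows "I = {1..m}" and "\<forall>j\<in>{1..n}. mu j = -1"
proof -
  have I: "I \<subseteq> {1..m}" and mu: "mu \<in> S_set n lam"
    and deg: "of_nat m + absv n lam = of_nat (card I) + absv n mu"
    using b by (auto simp: Lidx_def)
  have mu_neg: "\<exists>k::nat. k \<ge> 1 \<and> mu j = - of_nat k" if "j \<in> {1..n}" for j
    using mu that lam Xset_minus_one by (auto simp: S_set_def)
  have Re_le: "Re (mu j) \<le> -1" if "j \<in> {1..n}" for j
    using mu_neg[OF that] by auto
  have "absv n lam = - of_nat n" using lam by (simp add: absv_def)
  then have "of_nat m - of_nat n = of_nat (card I) + absv n mu" using deg by simp
  from arg_cong[OF this, of Re]
  have Re_deg: "real m - real n = real (card I) + (\<Sum>j=1..n. Re (mu j))"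
    by (simp add: absv_def)
  have "(\<Sum>j=1..n. Re (mu j)) \<le> (\<Sum>j=1..n. -1)"
    by (rule sum_mono) (use Re_le in auto)
  moreover have "card I \<le> m" using card_mono[OF _ I] by simp
  ultimately have card: "card I = m" and sum: "(\<Sum>j=1..n. Re (mu j)) = - real n"
    using Re_deg by auto
  show "I = {1..m}" using card_subset_eq[OF _ I] card by simp
  have "(\<Sum>j=1..n. - (Re (mu j) + 1)) = - ((\<Sum>j=1..n. Re (mu j)) + (\<Sum>j=1..n. 1))"
    by (simp only: sum_negf sum.distrib)
  then have "(\<Sum>j=1..n. - (Re (mu j) + 1)) = 0" using sum by simp
  then have Re_eq: "\<forall>j\<in>{1..n}. - (Re (mu j) + 1) = 0"
    by (subst sum_nonneg_eq_0_iff[symmetric]) (use Re_le in auto)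
  show "\<forall>j\<in>{1..n}. mu j = -1"
  proof
    fix j assume j: "j \<in> {1..n}"
    then obtain k :: nat where k: "mu j = - of_nat k" using mu_neg by blast
    have "Re (mu j) = -1" using Re_eq j by simp
    then have "k = 1" using k by simp
    then show "mu j = -1" using k by simp
  qed
qed

lemma minus_one_add_unitv_notin_S_set:
  assumes "\<forall>j\<in>{1..n}. lam j = -1" "mu l = -1" "l \<in> {1..n}"
  shows "mu + unitv l \<notin> S_set n lam"
proof
  assume "mu + unitv l \<in> S_set n lam"
  then have "(mu + unitv l) l \<in> Xset (lam l)" using assms(3) by (auto simp: S_set_def)
  then have "(0::complex) \<in> Xset (-1)" using assms by (simp add: unitv_def)
  then show False unfolding Xset_minus_one by auto
qed

text \<open>Of a \<open>K\<close>-module only the grading and the derivations \<open>\<partial>\<^sub>t\<^sub>s\<close> (even) and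
  \<open>\<partial>\<^sub>\<xi>\<^sub>l\<close> (odd) enter \<open>\<sigma>\<close>.\<close>

locale weyl_derivations = vector_space sc for sc :: "complex \<Rightarrow> 'p::ab_group_add \<Rightarrow> 'p" +
  fixes m n :: nat and gam :: "'p \<Rightarrow> 'p" and Dt Dx :: "nat \<Rightarrow> 'p \<Rightarrow> 'p"
  assumes gam_add: "gam (x + y) = gam x + gam y"
    and gam_scale: "gam (sc c x) = sc c (gam x)"
    and gam_gam: "gam (gam x) = x"
    and Dt_add: "s \<in> {1..m} \<Longrightarrow> Dt s (x + y) = Dt s x + Dt s y"
    and Dt_scale: "s \<in> {1..m} \<Longrightarrow> Dt s (sc c x) = sc c (Dt s x)"
    and Dx_add: "l \<in> {1..n} \<Longrightarrow> Dx l (x + y) = Dx l x + Dx l y"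
    and Dx_scale: "l \<in> {1..n} \<Longrightarrow> Dx l (sc c x) = sc c (Dx l x)"
    and gam_Dt: "s \<in> {1..m} \<Longrightarrow> gam (Dt s x) = Dt s (gam x)"
    and gam_Dx: "l \<in> {1..n} \<Longrightarrow> gam (Dx l x) = - Dx l (gam x)"
    and Dt_Dt: "s \<in> {1..m} \<Longrightarrow> s' \<in> {1..m} \<Longrightarrow> Dt s (Dt s' x) = Dt s' (Dt s x)"
    and Dx_Dx: "l \<in> {1..n} \<Longrightarrow> l' \<in> {1..n} \<Longrightarrow> Dx l (Dx l' x) = - Dx l' (Dx l x)"
    and Dt_Dx: "s \<in> {1..m} \<Longrightarrow> l \<in> {1..n} \<Longrightarrow> Dt s (Dx l x) = Dx l (Dt s x)"
begin

lemma scale_half_double: "sc (1/2) (x + x) = x"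
proof -
  have "sc (1/2) (x + x) = sc (1/2 + 1/2) x" by (simp only: scale_right_distrib scale_left_distrib)
  then show ?thesis by simp
qed

lemma eq_uminus_self_imp_zero:
  assumes "x = - x"
  shows "x = (0 :: 'p)"
proof -
  have "x + x = 0" using assms by (metis add.right_inverse)
  then show ?thesis using scale_half_double[of x] by simp
qed

lemma fun_eq_uminus_self_imp_zero: "(f :: bidx \<Rightarrow> 'p) = - f \<Longrightarrow> f = 0"
  by (auto simp: fun_eq_iff intro: eq_uminus_self_imp_zero)

lemma sum_sum_antisym_eq_zero:
  assumes "\<And>a b. a \<in> A \<Longrightarrow> b \<in> A \<Longrightarrow> g a b = - g b a"
  shows "(\<Sum>a\<in>A. \<Sum>b\<in>A. g a b) = (0 :: bidx \<Rightarrow> 'p)"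
proof (rule fun_eq_uminus_self_imp_zero)
  have "(\<Sum>a\<in>A. \<Sum>b\<in>A. g a b) = (\<Sum>b\<in>A. \<Sum>a\<in>A. g a b)" by (rule sum.swap)
  also have "\<dots> = (\<Sum>b\<in>A. \<Sum>a\<in>A. - g b a)" by (intro sum.cong refl assms)
  finally show "(\<Sum>a\<in>A. \<Sum>b\<in>A. g a b) = - (\<Sum>a\<in>A. \<Sum>b\<in>A. g a b)" by (simp add: sum_negf)
qed

lemma gam_zero [simp]: "gam 0 = 0"
  by (metis add_cancel_right_right gam_add)

lemma gam_diff: "gam (x - y) = gam x - gam y"
  using gam_add[of "x - y" y] by (simp add: eq_diff_eq)

lemma Dt_uminus: "s \<in> {1..m} \<Longrightarrow> Dt s (- x) = - Dt s x"
  by (metis add.right_inverse add_cancel_right_right add_eq_0_iff Dt_add)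

definition even_part :: "'p \<Rightarrow> 'p" where "even_part x = sc (1/2) (x + gam x)"

definition odd_part :: "'p \<Rightarrow> 'p" where "odd_part x = sc (1/2) (x - gam x)"

lemma even_part_zero [simp]: "even_part 0 = 0"
  by (simp add: even_part_def)

lemma odd_part_zero [simp]: "odd_part 0 = 0"
  by (simp add: odd_part_def)

lemma even_part_add: "even_part (x + y) = even_part x + even_part y"
  by (simp add: even_part_def gam_add algebra_simps)

lemma odd_part_add: "odd_part (x + y) = odd_part x + odd_part y"
  by (simp add: odd_part_def gam_add algebra_simps)

lemma gam_even_part: "gam (even_part x) = sc ((-1)^0) (even_part x)"
  by (simp add: even_part_def gam_scale gam_add gam_gam add.commute)

lemma gam_odd_part: "gam (odd_part x) = sc ((-1)^1) (odd_part x)"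
proof -
  have "gam (odd_part x) = sc (1/2) (gam x - x)" by (simp add: odd_part_def gam_scale gam_diff gam_gam)
  also have "\<dots> = - odd_part x" unfolding odd_part_def by (metis minus_diff_eq scale_minus_right)
  finally show ?thesis by simp
qed

lemma even_plus_odd_part: "even_part x + odd_part x = x"
proof -
  have "even_part x + odd_part x = sc (1/2) ((x + gam x) + (x - gam x))"
    unfolding even_part_def odd_part_def by (rule scale_right_distrib[symmetric])
  then show ?thesis by (simp add: scale_half_double)
qed

lemma exists_homogeneous_nonzero:
  fixes D :: "'p \<Rightarrow> 'p"
  assumes additive: "\<And>x y. D (x + y) = D x + D y" and "D v \<noteq> 0"
  shows "\<exists>u d. d \<le> 1 \<and> gam u = sc ((-1)^d) u \<and> D u \<noteq> 0"
proof -
  have "D v = D (even_part v) + D (odd_part v)"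
    by (metis additive even_plus_odd_part)
  then have "D (even_part v) \<noteq> 0 \<or> D (odd_part v) \<noteq> 0"
    using assms(2) by auto
  then show ?thesis
  proof
    assume "D (even_part v) \<noteq> 0"
    then show ?thesis using gam_even_part by blast
  next
    assume "D (odd_part v) \<noteq> 0"
    then show ?thesis using gam_odd_part by (intro exI[of _ "odd_part v"] exI[of _ 1]) auto
  qed
qed

end

locale sigma_complex = weyl_derivations sc m n gam Dt Dx
  for sc :: "complex \<Rightarrow> 'p::ab_group_add \<Rightarrow> 'p" and m n gam Dt Dx +
  fixes lam :: "nat \<Rightarrow> complex"
begin

abbreviation "S \<equiv> S_set n lam"
abbreviation "sig_hom \<equiv> sigma_hom m n lam sc Dt Dx"
abbreviation "sig \<equiv> sigma m n lam sc gam Dt Dx"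

definition sigma_summand :: "(bidx \<Rightarrow> 'p) \<Rightarrow> bidx \<Rightarrow> bidx \<Rightarrow> 'p" where
  "sigma_summand f b = sig_hom (even_part (f b)) 0 b + sig_hom (odd_part (f b)) 1 b"

lemma sig_hom_add: "sig_hom (u + v) d b = sig_hom u d b + sig_hom v d b"
proof -
  obtain I mu where b: "b = (I, mu)" by force
  have "(\<Sum>s\<in>{1..m}. if s \<in> I then 0 else tens (sc (wsign s I) (Dt s (u + v))) (insert s I, mu))
    = (\<Sum>s\<in>{1..m}. (if s \<in> I then 0 else tens (sc (wsign s I) (Dt s u)) (insert s I, mu))
         + (if s \<in> I then 0 else tens (sc (wsign s I) (Dt s v)) (insert s I, mu)))"
    by (rule sum.cong) (auto simp: Dt_add scale_right_distrib tens_add)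
  moreover have "(\<Sum>l\<in>{1..n}. if mu + unitv l \<in> S then tens (sc c (Dx l (u + v))) (I, mu + unitv l) else 0)
    = (\<Sum>l\<in>{1..n}. (if mu + unitv l \<in> S then tens (sc c (Dx l u)) (I, mu + unitv l) else 0)
        + (if mu + unitv l \<in> S then tens (sc c (Dx l v)) (I, mu + unitv l) else 0))" for c
    by (rule sum.cong) (auto simp: Dx_add scale_right_distrib tens_add)
  ultimately show ?thesis unfolding b sigma_hom_def by (simp add: sum.distrib algebra_simps)
qed

lemma sig_hom_zero [simp]: "sig_hom 0 d b = 0"
  using sig_hom_add[of 0 0 d b] by simp

lemma finite_supp_sig_hom [simp]: "finite (supp (sig_hom u d b))"
  unfolding sigma_hom_def by (auto split: prod.splits intro!: finite_supp_add finite_supp_sum)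

lemma sigma_eq_sum:
  assumes "finite B" "supp f \<subseteq> B"
  shows "sig f = (\<Sum>b\<in>B. sigma_summand f b)"
proof -
  have "sig f = (\<Sum>b\<in>supp f. sigma_summand f b)"
    by (simp add: sigma_def sigma_summand_def even_part_def odd_part_def)
  also have "\<dots> = (\<Sum>b\<in>B. sigma_summand f b)"
    by (rule sum.mono_neutral_left) (use assms in \<open>auto simp: supp_def sigma_summand_def\<close>)
  finally show ?thesis .
qed

lemma sigma_add:
  assumes "finite (supp f)" "finite (supp g)"
  shows "sig (f + g) = sig f + sig g"
proof -
  let ?B = "supp f \<union> supp g"
  have "sig (f + g) = (\<Sum>b\<in>?B. sigma_summand (f + g) b)"
    using assms supp_add_subset by (intro sigma_eq_sum) auto
  also have "\<dots> = (\<Sum>b\<in>?B. sigma_summand f b) + (\<Sum>b\<in>?B. sigma_summand g b)"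
    by (simp add: sigma_summand_def even_part_add odd_part_add sig_hom_add sum.distrib)
  also have "\<dots> = sig f + sig g"
    using assms by (simp add: sigma_eq_sum[of ?B])
  finally show ?thesis .
qed

lemma sigma_zero [simp]: "sig 0 = 0"
  by (simp add: sigma_def supp_def)

lemma sigma_sum:
  "(\<And>a. a \<in> A \<Longrightarrow> finite (supp (g a))) \<Longrightarrow> sig (\<Sum>a\<in>A. g a) = (\<Sum>a\<in>A. sig (g a))"
  by (induct A rule: infinite_finite_induct) (auto simp: sigma_add finite_supp_sum)

lemma sigma_tens_homogeneous:
  assumes "d \<le> 1" "gam v = sc ((-1)^d) v"
  shows "sig (tens v c) = sig_hom v d c"
proof -
  have "sig (tens v c) = (\<Sum>b\<in>{c}. sigma_summand (tens v c) b)"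
    by (rule sigma_eq_sum) (simp_all add: supp_tens_subset)
  moreover have "d = 0 \<or> d = 1" using assms(1) by auto
  ultimately show ?thesis
    using assms(2) by (auto simp: sigma_summand_def even_part_def odd_part_def tens_def scale_half_double)
qed

lemma sigma_sigma_hom:
  assumes "d \<le> 1" "gam u = sc ((-1)^d) u"
  shows "sig (sig_hom u d (I, mu)) =
      (\<Sum>s\<in>{1..m}. if s \<in> I then 0 else sig_hom (sc (wsign s I) (Dt s u)) d (insert s I, mu))
    + (\<Sum>l\<in>{1..n}. if mu + unitv l \<in> S
         then sig_hom (sc ((-1)^(d+1) * (-1)^card I) (Dx l u)) (1 - d) (I, mu + unitv l) else 0)"
proof -
  \<comment> \<open>An opaque name for the scalar keeps the simplifier from normalising it below.\<close>
  define c :: complex where "c = (-1)^(d+1) * (-1)^card I"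
  have Dt_parity: "gam (sc w (Dt s u)) = sc ((-1)^d) (sc w (Dt s u))" if "s \<in> {1..m}" for s w
    using that assms(2) by (simp add: gam_scale gam_Dt Dt_scale mult.commute)
  have Dx_parity: "gam (sc w (Dx l u)) = sc ((-1)^(1 - d)) (sc w (Dx l u))" if "l \<in> {1..n}" for l w
    using that assms by (auto simp: gam_scale gam_Dx Dx_scale le_Suc_eq)
  have "sig_hom u d (I, mu) =
      (\<Sum>s\<in>{1..m}. if s \<in> I then 0 else tens (sc (wsign s I) (Dt s u)) (insert s I, mu))
    + (\<Sum>l\<in>{1..n}. if mu + unitv l \<in> S then tens (sc c (Dx l u)) (I, mu + unitv l) else 0)"
    unfolding sigma_hom_def c_def by simp
  then have "sig (sig_hom u d (I, mu)) =
      (\<Sum>s\<in>{1..m}. if s \<in> I then 0 else sig (tens (sc (wsign s I) (Dt s u)) (insert s I, mu)))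
    + (\<Sum>l\<in>{1..n}. if mu + unitv l \<in> S then sig (tens (sc c (Dx l u)) (I, mu + unitv l)) else 0)"
    by (simp add: sigma_add sigma_sum finite_supp_sum if_distrib[of sig] cong: if_cong)
  also have "\<dots> =
      (\<Sum>s\<in>{1..m}. if s \<in> I then 0 else sig_hom (sc (wsign s I) (Dt s u)) d (insert s I, mu))
    + (\<Sum>l\<in>{1..n}. if mu + unitv l \<in> S then sig_hom (sc c (Dx l u)) (1 - d) (I, mu + unitv l) else 0)"
    by (intro arg_cong2[where f = "(+)"] sum.cong refl)
      (simp_all add: sigma_tens_homogeneous[OF assms(1) Dt_parity]
        sigma_tens_homogeneous[OF _ Dx_parity])
  finally show ?thesis unfolding c_def .
qed

lemma wedge_wedge_cancel:
  assumes "I \<subseteq> {1..m}"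
  shows "(\<Sum>s\<in>{1..m}. \<Sum>s'\<in>{1..m}. if s \<in> I \<or> s' \<in> insert s I then 0 else
           tens (sc (wsign s' (insert s I)) (Dt s' (sc (wsign s I) (Dt s u)))) (insert s' (insert s I), mu))
         = 0"
proof (rule sum_sum_antisym_eq_zero)
  fix s s' assume s: "s \<in> {1..m}" and s': "s' \<in> {1..m}"
  show "(if s \<in> I \<or> s' \<in> insert s I then 0 else
           tens (sc (wsign s' (insert s I)) (Dt s' (sc (wsign s I) (Dt s u)))) (insert s' (insert s I), mu))
      = - (if s' \<in> I \<or> s \<in> insert s' I then 0 else
           tens (sc (wsign s (insert s' I)) (Dt s (sc (wsign s' I) (Dt s' u)))) (insert s (insert s' I), mu))"
  proof (cases "s \<in> I \<or> s' \<in> I \<or> s = s'")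
    case False
    have "finite I" using assms finite_subset by blast
    then have "wsign s' (insert s I) * wsign s I = - (wsign s (insert s' I) * wsign s' I)"
      using False by (intro wsign_insert_swap) auto
    then show ?thesis
      using False s s' by (simp add: Dt_scale Dt_Dt[OF s s'] insert_commute tens_uminus)
  qed auto
qed

lemma tau_tau_cancel:
  assumes "mu \<in> S"
  shows "(\<Sum>l\<in>{1..n}. \<Sum>l'\<in>{1..n}. if mu + unitv l \<in> S \<and> mu + unitv l + unitv l' \<in> S
           then tens (sc c' (Dx l' (sc c (Dx l u)))) (I, mu + unitv l + unitv l') else 0) = 0"
proof (rule sum_sum_antisym_eq_zero)
  fix l l' assume l: "l \<in> {1..n}" and l': "l' \<in> {1..n}"
  have swap: "mu + unitv l' + unitv l = mu + unitv l + unitv l'"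
    by (simp add: add.assoc add.commute)
  show "(if mu + unitv l \<in> S \<and> mu + unitv l + unitv l' \<in> S
           then tens (sc c' (Dx l' (sc c (Dx l u)))) (I, mu + unitv l + unitv l') else 0)
      = - (if mu + unitv l' \<in> S \<and> mu + unitv l' + unitv l \<in> S
           then tens (sc c' (Dx l (sc c (Dx l' u)))) (I, mu + unitv l' + unitv l) else 0)"
  proof (cases "l = l'")
    case True
    have "Dx l (Dx l u) = 0" using Dx_Dx[OF l l] eq_uminus_self_imp_zero by blast
    then show ?thesis using True l by (simp add: Dx_scale)
  next
    case False
    then have "mu + unitv l \<in> S \<and> mu + unitv l + unitv l' \<in> S \<longleftrightarrow> mu + unitv l + unitv l' \<in> S"
      and "mu + unitv l' \<in> S \<and> mu + unitv l' + unitv l \<in> S \<longleftrightarrow> mu + unitv l + unitv l' \<in> S"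
      using S_set_add_unitv_between[OF assms] l l' swap by metis+
    then show ?thesis
      using l l' by (simp add: swap Dx_scale Dx_Dx[OF l l'] tens_uminus)
  qed
qed

lemma wedge_tau_cancel:
  assumes "finite I" "s \<in> {1..m}" "l \<in> {1..n}" "s \<notin> I"
  shows "tens (sc ((-1)^(d+1) * (-1)^card (insert s I)) (Dx l (sc (wsign s I) (Dt s u)))) b
       + tens (sc (wsign s I) (Dt s (sc ((-1)^(d+1) * (-1)^card I) (Dx l u)))) b = 0"
proof -
  define a where "a = wsign s I * ((-1)^(d+1) * (-1)^card I)"
  have "sc ((-1)^(d+1) * (-1)^card (insert s I)) (Dx l (sc (wsign s I) (Dt s u)))
      = - sc a (Dx l (Dt s u))"
    using assms by (simp add: a_def Dx_scale mult_ac)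
  moreover have "sc (wsign s I) (Dt s (sc ((-1)^(d+1) * (-1)^card I) (Dx l u))) = sc a (Dx l (Dt s u))"
    using assms by (simp add: a_def Dt_scale Dt_Dx Dt_uminus)
  ultimately show ?thesis by (simp add: tens_uminus)
qed

lemma sigma_sigma_hom_eq_zero:
  assumes I: "I \<subseteq> {1..m}" and mu: "mu \<in> S" and d: "d \<le> 1" and par: "gam u = sc ((-1)^d) u"
  shows "sig (sig_hom u d (I, mu)) = 0"
proof -
  define wedge_wedge where "wedge_wedge s s' = (if s \<in> I \<or> s' \<in> insert s I then 0 else
      tens (sc (wsign s' (insert s I)) (Dt s' (sc (wsign s I) (Dt s u)))) (insert s' (insert s I), mu))"
    for s s'
  define wedge_tau where "wedge_tau s l = (if s \<in> I then 0 else if mu + unitv l \<in> S then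
      tens (sc ((-1)^(d+1) * (-1)^card (insert s I)) (Dx l (sc (wsign s I) (Dt s u)))) (insert s I, mu + unitv l)
      else 0)"
    for s l
  define tau_wedge where "tau_wedge l s = (if mu + unitv l \<in> S then (if s \<in> I then 0 else
      tens (sc (wsign s I) (Dt s (sc ((-1)^(d+1) * (-1)^card I) (Dx l u)))) (insert s I, mu + unitv l)) else 0)" for l s
  define tau_tau where "tau_tau l l' = (if mu + unitv l \<in> S \<and> mu + unitv l + unitv l' \<in> S then
      tens (sc ((-1)^((1 - d) + 1) * (-1)^card I) (Dx l' (sc ((-1)^(d+1) * (-1)^card I) (Dx l u)))) (I, mu + unitv l + unitv l')
      else 0)" for l l'
  have expand_after_wedge: "(if s \<in> I then 0 else sig_hom (sc (wsign s I) (Dt s u)) d (insert s I, mu))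
      = (\<Sum>s'\<in>{1..m}. wedge_wedge s s') + (\<Sum>l\<in>{1..n}. wedge_tau s l)" for s
    unfolding wedge_wedge_def wedge_tau_def sigma_hom_def by (cases "s \<in> I") simp_all
  have expand_after_tau: "(if mu + unitv l \<in> S then sig_hom (sc ((-1)^(d+1) * (-1)^card I) (Dx l u)) (1 - d) (I, mu + unitv l) else 0)
      = (\<Sum>s\<in>{1..m}. tau_wedge l s) + (\<Sum>l'\<in>{1..n}. tau_tau l l')" for l
    unfolding tau_wedge_def tau_tau_def sigma_hom_def by (cases "mu + unitv l \<in> S") simp_all
  have "sig (sig_hom u d (I, mu)) =
      (\<Sum>s\<in>{1..m}. if s \<in> I then 0 else sig_hom (sc (wsign s I) (Dt s u)) d (insert s I, mu))
    + (\<Sum>l\<in>{1..n}. if mu + unitv l \<in> S then sig_hom (sc ((-1)^(d+1) * (-1)^card I) (Dx l u)) (1 - d) (I, mu + unitv l) else 0)"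
    by (rule sigma_sigma_hom[OF d par])
  also have "\<dots> = (\<Sum>s\<in>{1..m}. (\<Sum>s'\<in>{1..m}. wedge_wedge s s') + (\<Sum>l\<in>{1..n}. wedge_tau s l))
    + (\<Sum>l\<in>{1..n}. (\<Sum>s\<in>{1..m}. tau_wedge l s) + (\<Sum>l'\<in>{1..n}. tau_tau l l'))"
    unfolding expand_after_wedge expand_after_tau ..
  also have "\<dots> = (\<Sum>s\<in>{1..m}. \<Sum>s'\<in>{1..m}. wedge_wedge s s')
      + (\<Sum>s\<in>{1..m}. \<Sum>l\<in>{1..n}. wedge_tau s l + tau_wedge l s) + (\<Sum>l\<in>{1..n}. \<Sum>l'\<in>{1..n}. tau_tau l l')"
    by (simp add: sum.distrib sum.swap[of tau_wedge] algebra_simps)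
  also have "\<dots> = 0"
  proof -
    have "finite I" using I finite_subset by blast
    then have "wedge_tau s l + tau_wedge l s = 0" if "s \<in> {1..m}" "l \<in> {1..n}" for s l
      using wedge_tau_cancel[OF \<open>finite I\<close> that, of d u "(insert s I, mu + unitv l)"]
      unfolding wedge_tau_def tau_wedge_def by auto
    then show ?thesis
      using wedge_wedge_cancel[OF I] tau_tau_cancel[OF mu] by (simp add: wedge_wedge_def tau_tau_def)
  qed
  finally show ?thesis .
qed

theorem sigma_sigma_eq_zero:
  assumes "f \<in> Fspace m n lam"
  shows "sig (sig f) = 0"
proof -
  have fin: "finite (supp f)" and sub: "supp f \<subseteq> Bset m n lam"
    using assms by (auto simp: Fspace_def)
  have "sig (sig f) = (\<Sum>b\<in>supp f. sig (sigma_summand f b))"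
    using fin by (simp add: sigma_eq_sum sigma_sum sigma_summand_def)
  also have "\<dots> = 0"
  proof (rule sum.neutral, rule ballI)
    fix b assume "b \<in> supp f"
    then obtain I mu where b: "b = (I, mu)" "I \<subseteq> {1..m}" "mu \<in> S"
      using sub by (auto simp: Bset_def)
    then show "sig (sigma_summand f b) = 0"
      using sigma_sigma_hom_eq_zero gam_even_part gam_odd_part
      by (simp add: sigma_summand_def sigma_add)
  qed
  finally show ?thesis .
qed

lemma sig_hom_apply_wedge:
  assumes "s \<in> {1..m}" "s \<notin> I"
  shows "sig_hom u d (I, mu) (insert s I, mu) = sc (wsign s I) (Dt s u)"
proof -
  have "(\<Sum>s'\<in>{1..m}. if s' \<in> I then 0 else tens (sc (wsign s' I) (Dt s' u)) (insert s' I, mu))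
      (insert s I, mu) = (\<Sum>s'\<in>{1..m}. if s' = s then sc (wsign s' I) (Dt s' u) else 0)"
    unfolding sum_fun_apply
  proof (rule sum.cong[OF refl])
    fix s' assume "s' \<in> {1..m}"
    show "(if s' \<in> I then 0 else tens (sc (wsign s' I) (Dt s' u)) (insert s' I, mu)) (insert s I, mu)
       = (if s' = s then sc (wsign s' I) (Dt s' u) else 0)"
    proof (cases "s' \<in> I")
      case False
      then have "insert s I = insert s' I \<longleftrightarrow> s' = s" using assms(2) by blast
      then show ?thesis using False by (auto simp: tens_apply)
    qed (use assms in auto)
  qed
  moreover have "(\<Sum>l\<in>{1..n}. if mu + unitv l \<in> S then tens (sc c (Dx l u)) (I, mu + unitv l) else 0)
      (insert s I, mu) = 0" for c
    unfolding sum_fun_apply using assms(2) by (intro sum.neutral) (auto simp: tens_apply)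
  ultimately show ?thesis
    using assms(1) unfolding sigma_hom_def prod.case plus_fun_apply by simp
qed

lemma sig_hom_apply_tau:
  assumes "{1..m} \<subseteq> I" "l \<in> {1..n}" "mu + unitv l \<in> S"
  shows "sig_hom u d (I, mu) (I, mu + unitv l) = sc ((-1)^(d+1) * (-1)^card I) (Dx l u)"
proof -
  have unitv_inj: "mu + unitv l' = mu + unitv l \<longleftrightarrow> l' = l" for l'
  proof
    assume "mu + unitv l' = mu + unitv l"
    then have "unitv l' l = unitv l l" by (metis add_left_cancel plus_fun_apply)
    then show "l' = l" by (simp add: unitv_def split: if_splits)
  qed simp
  have "(\<Sum>l'\<in>{1..n}. if mu + unitv l' \<in> S then tens (sc c (Dx l' u)) (I, mu + unitv l') else 0)
      (I, mu + unitv l) = (\<Sum>l'\<in>{1..n}. if l' = l then sc c (Dx l' u) else 0)" for c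
    unfolding sum_fun_apply
  proof (rule sum.cong[OF refl])
    fix l' assume "l' \<in> {1..n}"
    show "(if mu + unitv l' \<in> S then tens (sc c (Dx l' u)) (I, mu + unitv l') else 0) (I, mu + unitv l)
      = (if l' = l then sc c (Dx l' u) else 0)"
      using assms(3) unitv_inj[of l'] by (auto simp: tens_apply)
  qed
  moreover have "(\<Sum>s\<in>{1..m}. if s \<in> I then 0 else tens (sc (wsign s I) (Dt s u)) (insert s I, mu)) = 0"
    using assms(1) by (intro sum.neutral) auto
  ultimately show ?thesis
    using assms(2) unfolding sigma_hom_def prod.case plus_fun_apply by simp
qed

lemma sig_hom_top_eq_zero:
  assumes "{1..m} \<subseteq> I" "\<forall>l\<in>{1..n}. mu + unitv l \<notin> S"
  shows "sig_hom u d (I, mu) = 0"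
proof -
  have "(\<Sum>s\<in>{1..m}. if s \<in> I then 0 else tens (sc (wsign s I) (Dt s u)) (insert s I, mu)) = 0"
    using assms(1) by (intro sum.neutral) auto
  moreover have "(\<Sum>l\<in>{1..n}. if mu + unitv l \<in> S then tens (sc c (Dx l u)) (I, mu + unitv l) else 0) = 0"
    for c using assms(2) by (intro sum.neutral) auto
  ultimately show ?thesis unfolding sigma_hom_def prod.case by simp
qed

lemma sigma_FLspace_minus_one:
  assumes "\<forall>j\<in>{1..n}. lam j = -1" "f \<in> FLspace m n m lam"
  shows "sig f = 0"
proof -
  have "sig f = (\<Sum>b\<in>supp f. sigma_summand f b)"
    using assms(2) by (intro sigma_eq_sum) (auto simp: FLspace_def)
  also have "\<dots> = 0"
  proof (rule sum.neutral, rule ballI)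
    fix b assume "b \<in> supp f"
    moreover obtain I mu where b: "b = (I, mu)" by force
    ultimately have "(I, mu) \<in> Lidx m n m lam" using assms(2) by (auto simp: FLspace_def)
    then have "I = {1..m}" "\<forall>l\<in>{1..n}. mu + unitv l \<notin> S"
      using Lidx_minus_one[OF assms(1)] minus_one_add_unitv_notin_S_set[OF assms(1)] by blast+
    then show "sigma_summand f b = 0"
      unfolding sigma_summand_def b by (simp add: sig_hom_top_eq_zero)
  qed
  finally show ?thesis .
qed

lemma sigma_FLspace_nonzero_wedge:
  assumes "r < m" "Dt m v \<noteq> 0"
  shows "\<exists>f \<in> FLspace m n r lam. sig f \<noteq> 0"
proof -
  have m: "m \<in> {1..m}" using assms(1) by simp
  obtain u d where u: "d \<le> 1" "gam u = sc ((-1)^d) u" "Dt m u \<noteq> 0"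
    using exists_homogeneous_nonzero[of "Dt m", OF Dt_add[OF m]] assms(2) by blast
  define b where "b = ({1..r}, (0 :: nat \<Rightarrow> complex))"
  have "b \<in> Lidx m n r lam"
    using assms(1) by (auto simp: b_def Lidx_def S_set_def Xset_def absv_def)
  then have "tens u b \<in> FLspace m n r lam"
    using supp_tens_subset[of u b] by (auto simp: FLspace_def)
  moreover have "sig (tens u b) (insert m {1..r}, 0) = sc (wsign m {1..r}) (Dt m u)"
    using assms(1) m by (simp add: sigma_tens_homogeneous[OF u(1,2)] b_def sig_hom_apply_wedge)
  moreover have "sc (wsign m {1..r}) (Dt m u) \<noteq> 0"
    using u(3) by (simp add: wsign_def)
  ultimately show ?thesis by (metis zero_fun_apply)
qed

lemma sigma_FLspace_nonzero_tau:
  assumes j: "j \<in> {1..n}" "lam j \<noteq> -1" and "Dx j v \<noteq> 0"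
  shows "\<exists>f \<in> FLspace m n m lam. sig f \<noteq> 0"
proof -
  obtain u d where u: "d \<le> 1" "gam u = sc ((-1)^d) u" "Dx j u \<noteq> 0"
    using exists_homogeneous_nonzero[of "Dx j", OF Dx_add[OF j(1)]] assms(3) by blast
  define mu where "mu = (\<lambda>k. if k \<in> {1..n} then lam k else 0)"
  define b where "b = ({1..m}, mu)"
  have "mu \<in> S" by (auto simp: mu_def S_set_def mem_Xset_self)
  moreover have "absv n mu = absv n lam" unfolding absv_def mu_def by (rule sum.cong) auto
  ultimately have "b \<in> Lidx m n m lam" by (auto simp: b_def Lidx_def)
  then have "tens u b \<in> FLspace m n m lam"
    using supp_tens_subset[of u b] by (auto simp: FLspace_def)
  moreover have "mu + unitv j \<in> S"
    using j add_one_mem_Xset by (auto simp: S_set_def mu_def unitv_def mem_Xset_self)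
  then have "sig (tens u b) ({1..m}, mu + unitv j) = sc ((-1)^(d+1) * (-1)^m) (Dx j u)"
    using j by (simp add: sigma_tens_homogeneous[OF u(1,2)] b_def sig_hom_apply_tau)
  moreover have "sc ((-1)^(d+1) * (-1)^m) (Dx j u) \<noteq> 0" using u(3) by simp
  ultimately show ?thesis by (metis zero_fun_apply)
qed

theorem sigma_FLspace_eq_zero_iff:
  assumes "r \<le> m"
    and "\<forall>s\<in>{1..m}. \<exists>v. Dt s v \<noteq> 0" and "\<forall>l\<in>{1..n}. \<exists>v. Dx l v \<noteq> 0"
  shows "(\<forall>f \<in> FLspace m n r lam. sig f = 0) \<longleftrightarrow> r = m \<and> (\<forall>j\<in>{1..n}. lam j = -1)"
proof (cases "r = m")
  case True
  then show ?thesis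
    using assms(3) sigma_FLspace_minus_one sigma_FLspace_nonzero_tau by blast
next
  case False
  then have "r < m" "m \<in> {1..m}" using assms(1) by auto
  then show ?thesis
    using assms(2) sigma_FLspace_nonzero_wedge by blast
qed

end

lemma weyl_super_module_derivations:
  assumes "weyl_super_module m n laurent sc gam T Ti Dt X Dx"
  shows "weyl_derivations sc m n gam Dt Dx"
proof -
  note K = assms[unfolded weyl_super_module_def]
  have linear: "f (x + y) = f x + f y" "f (sc c x) = sc c (f x)" if "Vector_Spaces.linear sc sc f" for f x y c
    using that by (simp_all add: Vector_Spaces.linear_iff)
  have vs: "vector_space sc" and "Vector_Spaces.linear sc sc gam" and "\<forall>u. gam (gam u) = u"
    using K by blast+
  then have gam: "gam (x + y) = gam x + gam y" "gam (sc c x) = sc c (gam x)" "gam (gam x) = x" for x y c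
    by (simp_all add: linear)
  have "Vector_Spaces.linear sc sc (Dt s)" if "s \<in> {1..m}" for s
    using K that by blast
  then have Dt: "Dt s (x + y) = Dt s x + Dt s y" "Dt s (sc c x) = sc c (Dt s x)" if "s \<in> {1..m}" for s x y c
    using that by (simp_all add: linear)
  have "Vector_Spaces.linear sc sc (Dx l)" if "l \<in> {1..n}" for l
    using K that by blast
  then have Dx: "Dx l (x + y) = Dx l x + Dx l y" "Dx l (sc c x) = sc c (Dx l x)" if "l \<in> {1..n}" for l x y c
    using that by (simp_all add: linear)
  have parity: "s \<in> {1..m} \<Longrightarrow> gam (Dt s x) = Dt s (gam x)"
      "l \<in> {1..n} \<Longrightarrow> gam (Dx l x) = - Dx l (gam x)" for s l x
    using K by blast+
  have relations: "s \<in> {1..m} \<Longrightarrow> s' \<in> {1..m} \<Longrightarrow> Dt s (Dt s' x) = Dt s' (Dt s x)"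
      "l \<in> {1..n} \<Longrightarrow> l' \<in> {1..n} \<Longrightarrow> Dx l (Dx l' x) = - Dx l' (Dx l x)"
      "s \<in> {1..m} \<Longrightarrow> l \<in> {1..n} \<Longrightarrow> Dt s (Dx l x) = Dx l (Dt s x)" for s s' l l' x
    using K by blast+
  show ?thesis
    by (rule weyl_derivations.intro[OF vs], rule weyl_derivations_axioms.intro)
      (fact gam Dt Dx parity relations)+
qed

lemma weyl_super_module_derivations_nonzero:
  fixes sc :: "complex \<Rightarrow> 'p::ab_group_add \<Rightarrow> 'p" and w :: 'p
  assumes "weyl_super_module m n laurent sc gam T Ti Dt X Dx" "w \<noteq> 0"
  shows "\<forall>s\<in>{1..m}. \<exists>v. Dt s v \<noteq> 0" and "\<forall>l\<in>{1..n}. \<exists>v. Dx l v \<noteq> 0"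
proof -
  note K = assms(1)[unfolded weyl_super_module_def]
  have t_relations: "\<forall>i\<in>{1..m}. \<forall>k\<in>{1..m}. \<forall>u. T i (T k u) = T k (T i u) \<and>
      Dt i (Dt k u) = Dt k (Dt i u) \<and> Dt i (T k u) = T k (Dt i u) + (if i = k then u else 0)"
    using K by blast
  have xi_relations: "\<forall>j\<in>{1..n}. \<forall>l\<in>{1..n}. \<forall>u. X j (X l u) = - X l (X j u) \<and>
      Dx j (Dx l u) = - Dx l (Dx j u) \<and> Dx j (X l u) = - X l (Dx j u) + (if j = l then u else 0)"
    using K by blast
  show "\<forall>s\<in>{1..m}. \<exists>v. Dt s v \<noteq> 0"
  proof (rule ballI, rule ccontr)
    fix s assume s: "s \<in> {1..m}" and "\<nexists>v. Dt s v \<noteq> 0"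
    then have "Dt s (T s w) = 0" "Dt s w = 0" by auto
    moreover have "Dt s (T s w) = T s (Dt s w) + w" using t_relations s by auto
    moreover have "Vector_Spaces.linear sc sc (T s)" using K s by blast
    then have "T s 0 = 0" by (rule module_hom.zero[OF module_hom_linearI])
    ultimately show False using assms(2) by simp
  qed
  show "\<forall>l\<in>{1..n}. \<exists>v. Dx l v \<noteq> 0"
  proof (rule ballI, rule ccontr)
    fix l assume l: "l \<in> {1..n}" and "\<nexists>v. Dx l v \<noteq> 0"
    then have "Dx l (X l w) = 0" "Dx l w = 0" by auto
    moreover have "Dx l (X l w) = - X l (Dx l w) + w" using xi_relations l by auto
    moreover have "Vector_Spaces.linear sc sc (X l)" using K l by blast
    then have "X l 0 = 0" by (rule module_hom.zero[OF module_hom_linearI])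
    ultimately show False using assms(2) by simp
  qed
qed

theorem lemma4p2:
  fixes m n :: nat and laurent :: bool
    and sc :: "complex \<Rightarrow> 'p::ab_group_add \<Rightarrow> 'p" and gam :: "'p \<Rightarrow> 'p"
    and T Ti Dt X Dx :: "nat \<Rightarrow> 'p \<Rightarrow> 'p"
    and lam :: "nat \<Rightarrow> complex"
  assumes mn: "m + n > 0"
    and P: "simple_weyl_super_module m n laurent sc gam T Ti Dt X Dx"
  shows "(\<forall>f \<in> Fspace m n lam. sigma m n lam sc gam Dt Dx (sigma m n lam sc gam Dt Dx f) = 0)
       \<and> (\<forall>r \<in> {0..m}. (r \<noteq> m \<longrightarrow> (\<forall>j\<in>{1..n}. lam j = 0)) \<longrightarrow>
            ((\<forall>f \<in> FLspace m n r lam. sigma m n lam sc gam Dt Dx f = 0)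
             \<longleftrightarrow> (r = m \<and> (\<forall>j\<in>{1..n}. lam j = -1))))"
proof -
  obtain w :: 'p where K: "weyl_super_module m n laurent sc gam T Ti Dt X Dx" and "w \<noteq> 0"
    using P unfolding simple_weyl_super_module_def by blast
  interpret sigma_complex sc m n gam Dt Dx lam
    using weyl_super_module_derivations[OF K] by (simp add: sigma_complex_def)
  show ?thesis
    using sigma_sigma_eq_zero sigma_FLspace_eq_zero_iff
      weyl_super_module_derivations_nonzero[OF K \<open>w \<noteq> 0\<close>] by simp
qed

end
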